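(* For every prime $p$ there exists a linear $(p-2,p,p)$-AONT over $\mathbb{F}_p$, i.e. an invertible $p\times p$ matrix over $\mathbb{F}_p$ all of whose $(p-2)\times(p-2)$ submatrices are invertible.
   Context: A linear $(t,s,q)$-AONT over $\mathbb{F}_q$ is given by an invertible $s\times s$ matrix $M$ over $\mathbb{F}_q$ (transform $(y_1,\dots,y_s)=(x_1,\dots,x_s)M^{-1}$); $M$ defines a linear $(t,s,q)$-AONT iff every $t\times t$ submatrix of $M$ is invertible (a $0\times 0$ submatrix counts as invertible). *)

theory Defs
  imports "Jordan_Normal_Form.DL_Submatrix" "Berlekamp_Zassenhaus.Finite_Field"
begin

text \<open>The 0 x 0 matrix counts as invertible.\<close>

definition linear_AONT :: "nat \<Rightarrow> nat \<Rightarrow> 'a::field mat \<Rightarrow> bool" where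
  "linear_AONT t s M \<longleftrightarrow>
     M \<in> carrier_mat s s \<and> invertible_mat M \<and>
     (\<forall>I J. I \<subseteq> {..<s} \<longrightarrow> J \<subseteq> {..<s} \<longrightarrow> card I = t \<longrightarrow> card J = t \<longrightarrow>
        invertible_mat (submatrix M I J))"

end

theory Submission
  imports Defs "Jordan_Normal_Form.Determinant" "HOL-Computational_Algebra.Polynomial"
begin

(* For c, y in F_p let N(c, y) = 1 / (y - c) if c is nonzero (with 1 / 0 = 0) and N(0, y) = 1
   if y is nonzero, N(0, 0) = 0. Every 2 x 2 minor of N is nonzero, and N is invertible: for a
   kernel vector w, the polynomial sum_y w(y) (c - y)^(p - 2) in c has degree p - 2 but vanishes
   at the p - 1 nonzero points, so all power sums sum_y w(y) y^m with m < p vanish, which forces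
   w = 0. Jacobi's complementary minor principle then makes every (p - 2) x (p - 2) minor of
   M = N^-1 nonzero: padding a kernel vector x of the submatrix of M on rows I and columns J by
   zeros to X, the vector Y = M X vanishes on I and N Y = X vanishes off J, so the restriction
   of Y to the complement of I lies in the kernel of the (invertible) 2 x 2 submatrix of N on
   the rows outside J and the columns outside I; hence Y = 0 and X = N Y = 0. *)

lemma invertible_matE:
  fixes A :: "'a::semiring_1 mat"
  assumes "invertible_mat A" and A: "A \<in> carrier_mat n n"
  obtains B where "B \<in> carrier_mat n n" "A * B = 1\<^sub>m n" "B * A = 1\<^sub>m n"
proof -
  obtain B where AB: "A * B = 1\<^sub>m (dim_row A)" and BA: "B * A = 1\<^sub>m (dim_row B)"
    using assms(1) unfolding invertible_mat_def inverts_mat_def by blast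
  have "dim_col B = n" using arg_cong[OF AB, of dim_col] A by simp
  moreover have "dim_row B = n" using arg_cong[OF BA, of dim_col] A by simp
  ultimately have "B \<in> carrier_mat n n" by blast
  then show ?thesis using AB BA A by (intro that) simp_all
qed

lemma invertible_mat_iff_trivial_kernel:
  fixes A :: "'a::field mat"
  assumes A: "A \<in> carrier_mat n n"
  shows "invertible_mat A \<longleftrightarrow> (\<forall>v \<in> carrier_vec n. A *\<^sub>v v = 0\<^sub>v n \<longrightarrow> v = 0\<^sub>v n)"
proof
  assume "invertible_mat A"
  then obtain B where B: "B \<in> carrier_mat n n" and BA: "B * A = 1\<^sub>m n"
    using A by (rule invertible_matE)
  show "\<forall>v \<in> carrier_vec n. A *\<^sub>v v = 0\<^sub>v n \<longrightarrow> v = 0\<^sub>v n"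
  proof (intro ballI impI)
    fix v :: "'a vec" assume v: "v \<in> carrier_vec n" and Av: "A *\<^sub>v v = 0\<^sub>v n"
    have "v = (B * A) *\<^sub>v v" using B BA v by auto
    also have "\<dots> = B *\<^sub>v (A *\<^sub>v v)" using A B v by (simp add: assoc_mult_mat_vec)
    also have "\<dots> = 0\<^sub>v n" using Av B by auto
    finally show "v = 0\<^sub>v n" .
  qed
next
  assume "\<forall>v \<in> carrier_vec n. A *\<^sub>v v = 0\<^sub>v n \<longrightarrow> v = 0\<^sub>v n"
  then have "det A \<noteq> 0" using det_0_iff_vec_prod_zero_field[OF A] by blast
  then obtain B where "B \<in> carrier_mat n n" "A * B = 1\<^sub>m n" "B * A = 1\<^sub>m n"
    using det_non_zero_imp_unit[OF A \<open>det A \<noteq> 0\<close>, of undefined] unfolding Units_def ring_mat_def by auto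
  then show "invertible_mat A"
    using A unfolding invertible_mat_def inverts_mat_def by auto
qed

lemma bij_betw_pick:
  assumes "finite J"
  shows "bij_betw (pick J) {..<card J} J"
proof (rule bij_betw_imageI)
  have "strict_mono_on {..<card J} (pick J)"
    by (rule strict_mono_onI) (use pick_mono_le in blast)
  then show "inj_on (pick J) {..<card J}"
    by (rule strict_mono_on_imp_inj_on)
  show "pick J ` {..<card J} = J"
  proof
    show "pick J ` {..<card J} \<subseteq> J" using pick_in_set_le by blast
    show "J \<subseteq> pick J ` {..<card J}"
    proof
      fix j assume j: "j \<in> J"
      have "{a \<in> J. a < j} \<subset> J" using j by auto
      then have "card {a \<in> J. a < j} < card J" by (rule psubset_card_mono[OF assms])
      then have "pick J (card {a \<in> J. a < j}) \<in> pick J ` {..<card J}" by simp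
      then show "j \<in> pick J ` {..<card J}" by (simp only: pick_card_in_set[OF j])
    qed
  qed
qed

lemma pick_lessThan:
  assumes "i < n"
  shows "pick {..<n} i = i"
  using pick_reduce_set[of i n UNIV] assms by (simp add: pick_UNIV lessThan_def)

lemma
  fixes A :: "'a mat"
  assumes A: "A \<in> carrier_mat n m" and I: "I \<subseteq> {..<n}" and J: "J \<subseteq> {..<m}"
  shows submatrix_carrier_mat: "submatrix A I J \<in> carrier_mat (card I) (card J)"
    and submatrix_index_subset:
      "a < card I \<Longrightarrow> b < card J \<Longrightarrow> submatrix A I J $$ (a, b) = A $$ (pick I a, pick J b)"
proof -
  have rows: "{i. i < dim_row A \<and> i \<in> I} = I" using A I by blast
  have cols: "{j. j < dim_col A \<and> j \<in> J} = J" using A J by blast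
  show "submatrix A I J \<in> carrier_mat (card I) (card J)"
    unfolding carrier_mat_def mem_Collect_eq dim_submatrix rows cols by (rule conjI refl)+
  show "a < card I \<Longrightarrow> b < card J \<Longrightarrow> submatrix A I J $$ (a, b) = A $$ (pick I a, pick J b)"
    using submatrix_index[of a A I b J] unfolding rows cols .
qed

lemma submatrix_lessThan:
  assumes A: "A \<in> carrier_mat n m"
  shows "submatrix A {..<n} {..<m} = A"
proof (rule eq_matI)
  have S: "submatrix A {..<n} {..<m} \<in> carrier_mat n m"
    using submatrix_carrier_mat[OF A, of "{..<n}" "{..<m}"] by simp
  then show "dim_row (submatrix A {..<n} {..<m}) = dim_row A"
    and "dim_col (submatrix A {..<n} {..<m}) = dim_col A" using A by simp_all
  fix i j assume "i < dim_row A" "j < dim_col A"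
  then show "submatrix A {..<n} {..<m} $$ (i, j) = A $$ (i, j)"
    using A submatrix_index_subset[OF A, of "{..<n}" "{..<m}" i j] by (simp add: pick_lessThan)
qed

definition subvec :: "'a vec \<Rightarrow> nat set \<Rightarrow> 'a vec" where
  "subvec v J = vec (card J) (\<lambda>k. v $ pick J k)"

lemma subvec_zero_vec:
  assumes "J \<subseteq> {..<n}"
  shows "subvec (0\<^sub>v n) J = 0\<^sub>v (card J)"
proof (rule eq_vecI)
  fix k assume "k < dim_vec (0\<^sub>v (card J) :: 'a vec)"
  then have "pick J k \<in> J" by (simp add: pick_in_set_le)
  then show "subvec (0\<^sub>v n) J $ k = (0\<^sub>v (card J) :: 'a vec) $ k"
    using assms \<open>k < dim_vec (0\<^sub>v (card J))\<close> by (auto simp: subvec_def)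
qed (simp add: subvec_def)

lemma ex_supported_vec_subvec_eq:
  assumes J: "J \<subseteq> {..<m}" and x: "x \<in> carrier_vec (card J)"
  shows "\<exists>X \<in> carrier_vec m. (\<forall>j<m. j \<notin> J \<longrightarrow> X $ j = 0) \<and> subvec X J = x"
proof (intro bexI conjI)
  let ?X = "vec m (\<lambda>j. if j \<in> J then x $ card {a \<in> J. a < j} else 0)"
  show "subvec ?X J = x"
  proof (rule eq_vecI)
    fix k assume "k < dim_vec x"
    then have k: "k < card J" using x by simp
    then have "pick J k \<in> J" "card {a \<in> J. a < pick J k} = k"
      by (rule pick_in_set_le, rule card_pick_le)
    moreover have "pick J k < m" using \<open>pick J k \<in> J\<close> J by auto
    ultimately show "subvec ?X J $ k = x $ k" using k by (simp add: subvec_def)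
  qed (use x in \<open>simp add: subvec_def\<close>)
qed auto

lemma supported_vec_eq_0_if_subvec_eq_0:
  assumes v: "v \<in> carrier_vec m" and J: "J \<subseteq> {..<m}"
    and supp: "\<And>j. j < m \<Longrightarrow> j \<notin> J \<Longrightarrow> v $ j = 0" and "subvec v J = 0\<^sub>v (card J)"
  shows "v = 0\<^sub>v m"
proof (rule eq_vecI)
  fix j assume "j < dim_vec (0\<^sub>v m :: 'a vec)"
  then have j: "j < m" by simp
  show "v $ j = 0\<^sub>v m $ j"
  proof (cases "j \<in> J")
    case True
    then have "j \<in> pick J ` {..<card J}"
      using bij_betw_pick[OF finite_subset[OF J]] by (simp add: bij_betw_def)
    then obtain k where "k < card J" "j = pick J k" by blast
    then show ?thesis using \<open>subvec v J = 0\<^sub>v (card J)\<close> j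
      by (metis index_vec index_zero_vec(1) subvec_def)
  qed (use supp j in simp)
qed (use v in simp)

lemma submatrix_mult_subvec:
  assumes A: "A \<in> carrier_mat n m" and I: "I \<subseteq> {..<n}" and J: "J \<subseteq> {..<m}"
    and v: "v \<in> carrier_vec m" and supp: "\<And>j. j < m \<Longrightarrow> j \<notin> J \<Longrightarrow> v $ j = 0"
    and a: "a < card I"
  shows "(submatrix A I J *\<^sub>v subvec v J) $ a = (A *\<^sub>v v) $ pick I a"
proof -
  have "pick I a < n" using pick_in_set_le[OF a] I by auto
  have "(submatrix A I J *\<^sub>v subvec v J) $ a = (\<Sum>k<card J. A $$ (pick I a, pick J k) * v $ pick J k)"
    using submatrix_carrier_mat[OF A I J] a
    by (simp add: submatrix_index_subset[OF A I J] subvec_def scalar_prod_def lessThan_atLeast0)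
  also have "\<dots> = (\<Sum>j\<in>J. A $$ (pick I a, j) * v $ j)"
    using sum.reindex_bij_betw[OF bij_betw_pick[OF finite_subset[OF J]]] by simp
  also have "\<dots> = (\<Sum>j<m. A $$ (pick I a, j) * v $ j)"
    using J supp by (intro sum.mono_neutral_left) auto
  also have "\<dots> = (A *\<^sub>v v) $ pick I a"
    using A v \<open>pick I a < n\<close> by (simp add: scalar_prod_def lessThan_atLeast0)
  finally show ?thesis .
qed

lemma invertible_submatrix_inverse_complement:
  fixes N M :: "'a::field mat"
  assumes N: "N \<in> carrier_mat n n" and M: "M \<in> carrier_mat n n" and NM: "N * M = 1\<^sub>m n"
    and I: "I \<subseteq> {..<n}" and J: "J \<subseteq> {..<n}" and card: "card I = card J"
    and inv: "invertible_mat (submatrix N ({..<n} - J) ({..<n} - I))"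
  shows "invertible_mat (submatrix M I J)"
proof -
  let ?I' = "{..<n} - I" and ?J' = "{..<n} - J"
  have I': "?I' \<subseteq> {..<n}" and J': "?J' \<subseteq> {..<n}" by auto
  have card': "card ?J' = card ?I'" using card I J by (simp add: card_Diff_subset finite_subset)
  have MIJ: "submatrix M I J \<in> carrier_mat (card I) (card I)"
    using submatrix_carrier_mat[OF M I J] card by simp
  have NJI: "submatrix N ?J' ?I' \<in> carrier_mat (card ?I') (card ?I')"
    using submatrix_carrier_mat[OF N J' I'] card' by simp
  have "x = 0\<^sub>v (card I)"
    if x: "x \<in> carrier_vec (card I)" and Mx: "submatrix M I J *\<^sub>v x = 0\<^sub>v (card I)" for x
  proof -
    obtain X where X: "X \<in> carrier_vec n" and X_supp: "\<forall>j<n. j \<notin> J \<longrightarrow> X $ j = 0"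
      and X_x: "subvec X J = x"
      using ex_supported_vec_subvec_eq[OF J] x card by auto
    define Y where "Y = M *\<^sub>v X"
    have Y: "Y \<in> carrier_vec n" using M X by (simp add: Y_def)
    have Y_supp: "Y $ i = 0" if "i < n" "i \<notin> ?I'" for i
    proof -
      have "i \<in> pick I ` {..<card I}"
        using that bij_betw_pick[OF finite_subset[OF I]] by (simp add: bij_betw_def)
      then obtain a where a: "a < card I" "i = pick I a" by blast
      have "Y $ i = (submatrix M I J *\<^sub>v x) $ a"
        using submatrix_mult_subvec[OF M I J X _ a(1)] X_supp X_x a(2) by (simp add: Y_def)
      then show ?thesis using Mx a(1) by simp
    qed
    have X_NY: "X = N *\<^sub>v Y"
      using N M X NM by (simp add: Y_def assoc_mult_mat_vec[symmetric])
    have "submatrix N ?J' ?I' *\<^sub>v subvec Y ?I' = 0\<^sub>v (card ?I')"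
    proof (rule eq_vecI)
      fix a assume "a < dim_vec (0\<^sub>v (card ?I') :: 'a vec)"
      then have a: "a < card ?J'" using card' by simp
      have "pick ?J' a \<in> ?J'" using pick_in_set_le[OF a] .
      then have "(submatrix N ?J' ?I' *\<^sub>v subvec Y ?I') $ a = 0"
        using submatrix_mult_subvec[OF N J' I' Y Y_supp a] X_supp X_NY by auto
      then show "(submatrix N ?J' ?I' *\<^sub>v subvec Y ?I') $ a = 0\<^sub>v (card ?I') $ a"
        using a card' by simp
    qed (use NJI in simp)
    moreover have "subvec Y ?I' \<in> carrier_vec (card ?I')" by (simp add: subvec_def)
    ultimately have "subvec Y ?I' = 0\<^sub>v (card ?I')"
      using inv invertible_mat_iff_trivial_kernel[OF NJI] by blast
    then have "Y = 0\<^sub>v n"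
      using supported_vec_eq_0_if_subvec_eq_0[OF Y I'] Y_supp by blast
    then have "X = N *\<^sub>v 0\<^sub>v n" using X_NY by simp
    also have "\<dots> = 0\<^sub>v n" using N by auto
    finally have "X = 0\<^sub>v n" .
    then have "x = subvec (0\<^sub>v n) J" using X_x by simp
    then show ?thesis using subvec_zero_vec[OF J] card by simp
  qed
  then show ?thesis using invertible_mat_iff_trivial_kernel[OF MIJ] by blast
qed

lemma linear_AONT_inverse:
  fixes N M :: "'a::field mat"
  assumes N: "linear_AONT t n N" and t: "t \<le> n" and M: "M \<in> carrier_mat n n"
    and NM: "N * M = 1\<^sub>m n"
  shows "linear_AONT (n - t) n M"
proof -
  have Nc: "N \<in> carrier_mat n n"
    and N_sub: "\<And>I J. I \<subseteq> {..<n} \<Longrightarrow> J \<subseteq> {..<n} \<Longrightarrow> card I = t \<Longrightarrow> card J = t \<Longrightarrow>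
      invertible_mat (submatrix N I J)"
    using N unfolding linear_AONT_def by auto
  have "M * N = 1\<^sub>m n" by (rule mat_mult_left_right_inverse[OF Nc M NM])
  then have "invertible_mat M"
    unfolding invertible_mat_def inverts_mat_def using M NM Nc by (intro conjI exI[of _ N]) auto
  moreover have "invertible_mat (submatrix M I J)"
    if I: "I \<subseteq> {..<n}" and J: "J \<subseteq> {..<n}" and "card I = n - t" "card J = n - t" for I J
  proof (rule invertible_submatrix_inverse_complement[OF Nc M NM I J])
    show "card I = card J" using that by simp
    have "card ({..<n} - J) = t" "card ({..<n} - I) = t"
      using card_Diff_subset[OF finite_subset[OF J finite_lessThan] J]
        card_Diff_subset[OF finite_subset[OF I finite_lessThan] I] that t by simp_all
    then show "invertible_mat (submatrix N ({..<n} - J) ({..<n} - I))" by (intro N_sub) auto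
  qed
  ultimately show ?thesis using M unfolding linear_AONT_def by blast
qed

lemma invertible_submatrix_card_2:
  fixes A :: "'a::field mat"
  assumes A: "A \<in> carrier_mat n m" and I: "I \<subseteq> {..<n}" "card I = 2"
    and J: "J \<subseteq> {..<m}" "card J = 2"
    and minor: "\<And>i i' j j'. i \<in> I \<Longrightarrow> i' \<in> I \<Longrightarrow> j \<in> J \<Longrightarrow> j' \<in> J \<Longrightarrow> i \<noteq> i' \<Longrightarrow> j \<noteq> j' \<Longrightarrow>
      A $$ (i, j) * A $$ (i', j') \<noteq> A $$ (i, j') * A $$ (i', j)"
  shows "invertible_mat (submatrix A I J)"
proof -
  let ?S = "submatrix A I J"
  have S: "?S \<in> carrier_mat 2 2" using submatrix_carrier_mat[OF A I(1) J(1)] I J by simp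
  let ?a = "?S $$ (0, 0)" and ?b = "?S $$ (0, 1)" and ?c = "?S $$ (1, 0)" and ?d = "?S $$ (1, 1)"
  have S_index: "?S $$ (a, b) = A $$ (pick I a, pick J b)" if "a < 2" "b < 2" for a b
    using submatrix_index_subset[OF A I(1) J(1)] that I J by simp
  have "pick I 0 \<in> I" "pick I 1 \<in> I" "pick J 0 \<in> J" "pick J 1 \<in> J"
    using I(2) J(2) by (simp_all add: pick_in_set_le del: pick.simps)
  moreover have "pick I 0 \<noteq> pick I 1" "pick J 0 \<noteq> pick J 1"
    using pick_mono_le[of 1 I 0] pick_mono_le[of 1 J 0] I(2) J(2) by (simp_all del: pick.simps)
  ultimately have det: "?a * ?d - ?b * ?c \<noteq> 0"
    using minor S_index by simp
  have "v = 0\<^sub>v 2" if v: "v \<in> carrier_vec 2" and Sv: "?S *\<^sub>v v = 0\<^sub>v 2" for v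
  proof -
    have row: "(?S *\<^sub>v v) $ i = ?S $$ (i, 0) * v $ 0 + ?S $$ (i, 1) * v $ 1" if "i < 2" for i
      using S v that by (simp add: scalar_prod_def numeral_2_eq_2)
    have eq0: "?a * v $ 0 + ?b * v $ 1 = 0" using row[of 0] Sv by simp
    have eq1: "?c * v $ 0 + ?d * v $ 1 = 0" using row[of 1] Sv by simp
    have "(?a * ?d - ?b * ?c) * v $ 0 = ?d * (?a * v $ 0 + ?b * v $ 1) - ?b * (?c * v $ 0 + ?d * v $ 1)"
      and "(?a * ?d - ?b * ?c) * v $ 1 = ?a * (?c * v $ 0 + ?d * v $ 1) - ?c * (?a * v $ 0 + ?b * v $ 1)"
      by (simp_all add: algebra_simps)
    then have "(?a * ?d - ?b * ?c) * v $ 0 = 0" "(?a * ?d - ?b * ?c) * v $ 1 = 0"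
      unfolding eq0 eq1 by simp_all
    then have "v $ 0 = 0" "v $ 1 = 0" using det by simp_all
    then show ?thesis using v by (intro eq_vecI) (auto simp: less_2_cases_iff)
  qed
  then show ?thesis using invertible_mat_iff_trivial_kernel[OF S] by blast
qed

lemma card_finite_field_ge_2: "2 \<le> CARD('a::finite_field)"
proof -
  have "card {0, 1 :: 'a} \<le> CARD('a)" by (rule card_mono) simp_all
  then show ?thesis by simp
qed

lemma power_card_minus_1:
  fixes x :: "'a::finite_field"
  shows "x ^ (CARD('a) - 1) = (if x = 0 then 0 else 1)"
proof -
  have "x * x ^ (CARD('a) - 1) = x ^ CARD('a)"
    using card_finite_field_ge_2[where ?'a = 'a] by (cases "CARD('a)") simp_all
  also have "\<dots> = x" by (rule finite_field_power_card_eq_same)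
  finally show ?thesis
    using card_finite_field_ge_2[where ?'a = 'a] by (cases "x = 0") simp_all
qed

lemma inverse_eq_power_card_minus_2:
  fixes x :: "'a::finite_field"
  assumes "3 \<le> CARD('a)"
  shows "inverse x = x ^ (CARD('a) - 2)"
proof (cases "x = 0")
  case False
  have "x * x ^ (CARD('a) - 2) = x ^ (CARD('a) - 1)"
    using assms by (simp flip: power_Suc add: Suc_diff_Suc numeral_2_eq_2)
  also have "\<dots> = 1" using False power_card_minus_1[of x] by simp
  finally show ?thesis by (rule inverse_unique)
qed (use assms in simp)

lemma of_nat_choose_neq_0:
  assumes "k \<le> n" and "n < CHAR('a::semiring_prime_char)"
  shows "of_nat (n choose k) \<noteq> (0 :: 'a)"
proof
  assume "of_nat (n choose k) = (0 :: 'a)"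
  then have "CHAR('a) dvd fact n"
    using binomial_fact_lemma[OF assms(1)] by (metis dvd_mult of_nat_eq_0_iff_char_dvd)
  with assms(2) show False by (simp add: prime_dvd_fact_iff)
qed

lemma bij_betw_of_nat_prime_field:
  assumes "CARD('a::finite_field) = CHAR('a)"
  shows "bij_betw (of_nat :: nat \<Rightarrow> 'a) {..<CHAR('a)} UNIV"
proof -
  have inj: "inj_on (of_nat :: nat \<Rightarrow> 'a) {..<CHAR('a)}"
    by (rule inj_onI) (simp add: of_nat_eq_iff_cong_CHAR cong_def)
  moreover have "(of_nat :: nat \<Rightarrow> 'a) ` {..<CHAR('a)} = UNIV"
    using inj assms by (intro card_subset_eq) (simp_all add: card_image)
  ultimately show ?thesis by (simp add: bij_betw_def)
qed

lemma poly_eq_0_if_vanishes_off_0: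
  fixes R :: "'a::{finite,idom} poly"
  assumes "degree R < CARD('a) - 1" and "\<And>c. c \<noteq> 0 \<Longrightarrow> poly R c = 0"
  shows "R = 0"
proof (rule ccontr)
  assume "R \<noteq> 0"
  have "CARD('a) - 1 = card (UNIV - {0 :: 'a})" by (simp add: card_Diff_subset)
  also have "\<dots> \<le> card {c. poly R c = 0}" using assms(2) by (intro card_mono) auto
  also have "\<dots> \<le> degree R" by (rule card_poly_roots_bound[OF \<open>R \<noteq> 0\<close>])
  finally show False using assms(1) by simp
qed

lemma power_sums_eq_0_imp_eq_0:
  fixes w :: "'a::{finite,field} \<Rightarrow> 'a"
  assumes sums: "\<And>m. m < CARD('a) \<Longrightarrow> (\<Sum>y\<in>UNIV. w y * y ^ m) = 0"
  shows "w e = 0"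
proof -
  define L where "L = (\<Prod>z\<in>UNIV - {e}. [:- z, 1:])"
  have "degree L \<le> card (UNIV - {e})"
    using degree_prod_sum_le[of "UNIV - {e}" "\<lambda>z. [:- z, 1:]"] by (simp add: L_def o_def)
  then have "degree L \<le> CARD('a) - 1" by (simp add: card_Diff_subset)
  moreover have "0 < CARD('a)" by (simp add: card_gt_0_iff)
  ultimately have deg_L: "degree L < CARD('a)" by linarith
  have poly_L: "poly L y = (\<Prod>z\<in>UNIV - {e}. y - z)" for y
    by (simp add: L_def poly_prod)
  have "(\<Sum>y\<in>UNIV. w y * poly L y) = (\<Sum>i\<le>degree L. coeff L i * (\<Sum>y\<in>UNIV. w y * y ^ i))"
    by (simp add: poly_altdef sum_distrib_left mult_ac sum.swap[of _ UNIV])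
  also have "\<dots> = 0" using deg_L sums by (intro sum.neutral) auto
  also have "(\<Sum>y\<in>UNIV. w y * poly L y) = w e * poly L e"
    by (rule sum.mono_neutral_right[where S = "{e}", simplified]) (auto simp: poly_L)
  finally show ?thesis by (simp add: poly_L)
qed

(* For p > 2, taking inverse y in row 0 as well would make every row sum to 0, so the matrix
   would be singular. *)
definition inv_shift :: "'a::field \<Rightarrow> 'a \<Rightarrow> 'a" where
  "inv_shift c y = (if c = 0 then (if y = 0 then 0 else 1) else inverse (y - c))"

definition inv_shift_mat :: "nat \<Rightarrow> 'a::field mat" where
  "inv_shift_mat n = mat n n (\<lambda>(i, j). inv_shift (of_nat i) (of_nat j))"

lemma inv_shift_minor_neq:
  fixes c1 c2 y1 y2 :: "'a::field"
  assumes "c1 \<noteq> c2" and "y1 \<noteq> y2"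
  shows "inv_shift c1 y1 * inv_shift c2 y2 \<noteq> inv_shift c1 y2 * inv_shift c2 y1"
proof -
  have "c1 * y1 + c2 * y2 - (c1 * y2 + c2 * y1) = (c1 - c2) * (y1 - y2)"
    by (simp add: algebra_simps)
  then have "c1 * y1 + c2 * y2 \<noteq> c1 * y2 + c2 * y1" using assms by auto
  then show ?thesis
    using assms by (auto simp: inv_shift_def field_simps split: if_splits)
qed

lemma inv_shift_sums_eq_0_imp_eq_0:
  fixes w :: "'a::finite_field \<Rightarrow> 'a"
  assumes prime_field: "CARD('a) = CHAR('a)" and three: "3 \<le> CARD('a)"
    and sums: "\<And>c. (\<Sum>y\<in>UNIV. inv_shift c y * w y) = 0"
  shows "w e = 0"
proof -
  define n where "n = CARD('a) - 2"
  define s where "s m = (\<Sum>y\<in>UNIV. w y * y ^ m)" for m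
  have card: "CARD('a) = Suc (Suc n)" using three by (simp add: n_def)
  have "inv_shift 0 y = y ^ Suc n" for y :: 'a
    using power_card_minus_1[of y] by (simp add: inv_shift_def card)
  then have s_top: "s (Suc n) = 0" using sums[of 0] by (simp add: s_def mult.commute)
  define R where "R = (\<Sum>y\<in>UNIV. smult (w y) ([:- y, 1:] ^ n))"
  have "R = 0"
  proof (rule poly_eq_0_if_vanishes_off_0)
    have "degree R \<le> n"
      unfolding R_def
      by (intro degree_sum_le) (auto intro: order.trans[OF degree_smult_le] simp: degree_linear_power)
    then show "degree R < CARD('a) - 1" using card by simp
    fix c :: 'a assume "c \<noteq> 0"
    have "(c - y) ^ n = (- 1) ^ n * inv_shift c y" for y
    proof -
      have "(c - y) ^ n = (- (y - c)) ^ n" by simp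
      also have "\<dots> = (- 1) ^ n * (y - c) ^ n" by (rule power_minus)
      finally show ?thesis
        using \<open>c \<noteq> 0\<close> inverse_eq_power_card_minus_2[OF three, of "y - c"]
        by (simp add: inv_shift_def n_def)
    qed
    then have "poly R c = (- 1) ^ n * (\<Sum>y\<in>UNIV. inv_shift c y * w y)"
      by (simp add: R_def poly_sum sum_distrib_left mult_ac)
    then show "poly R c = 0" using sums by simp
  qed
  have s_low: "s m = 0" if "m \<le> n" for m
  proof -
    have "coeff R (n - m) = (\<Sum>y\<in>UNIV. w y * (of_nat (n choose (n - m)) * (- y) ^ m))"
      using that by (simp add: R_def coeff_sum coeff_linear_poly_power)
    also have "\<dots> = of_nat (n choose (n - m)) * (- 1) ^ m * s m"
      unfolding s_def sum_distrib_left
      by (intro sum.cong refl, subst power_minus) (simp only: mult_ac)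
    finally have "coeff R (n - m) = of_nat (n choose (n - m)) * (- 1) ^ m * s m" .
    moreover have "of_nat (n choose (n - m)) \<noteq> (0 :: 'a)"
      using prime_field card by (intro of_nat_choose_neq_0) auto
    ultimately show ?thesis using \<open>R = 0\<close> by simp
  qed
  have "s m = 0" if "m < CARD('a)" for m
  proof (cases "m \<le> n")
    case True
    then show ?thesis by (rule s_low)
  next
    case False
    then have "m = Suc n" using that card by simp
    then show ?thesis using s_top by simp
  qed
  then show ?thesis unfolding s_def by (rule power_sums_eq_0_imp_eq_0)
qed

lemma invertible_inv_shift_mat:
  assumes prime_field: "CARD('a::finite_field) = CHAR('a)" and three: "3 \<le> CARD('a)"
  shows "invertible_mat (inv_shift_mat CARD('a) :: 'a mat)"
proof -
  let ?p = "CARD('a)" and ?N = "inv_shift_mat CARD('a) :: 'a mat"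
  have N: "?N \<in> carrier_mat ?p ?p" by (simp add: inv_shift_mat_def)
  have bij: "bij_betw (of_nat :: nat \<Rightarrow> 'a) {..<?p} UNIV"
    using bij_betw_of_nat_prime_field[OF prime_field] prime_field by simp
  have "v = 0\<^sub>v ?p" if v: "v \<in> carrier_vec ?p" and Nv: "?N *\<^sub>v v = 0\<^sub>v ?p" for v
  proof -
    define w where "w y = v $ the_inv_into {..<?p} of_nat y" for y :: 'a
    have w_of_nat: "w (of_nat j) = v $ j" if "j < ?p" for j
      using that bij by (simp add: w_def bij_betw_def the_inv_into_f_f)
    have "(\<Sum>y\<in>UNIV. inv_shift c y * w y) = 0" for c
    proof -
      obtain i where i: "i < ?p" "c = of_nat i"
        using bij by (metis bij_betw_def imageE lessThan_iff UNIV_I)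
      have "(\<Sum>y\<in>UNIV. inv_shift c y * w y) = (\<Sum>j<?p. inv_shift c (of_nat j) * w (of_nat j))"
        by (rule sum.reindex_bij_betw[OF bij, symmetric])
      also have "\<dots> = (?N *\<^sub>v v) $ i"
        using i v by (simp add: inv_shift_mat_def scalar_prod_def lessThan_atLeast0 w_of_nat)
      also have "\<dots> = 0" using Nv i by simp
      finally show ?thesis .
    qed
    then have "w y = 0" for y by (rule inv_shift_sums_eq_0_imp_eq_0[OF prime_field three])
    then show ?thesis using w_of_nat v by (intro eq_vecI) auto
  qed
  then show ?thesis using invertible_mat_iff_trivial_kernel[OF N] by blast
qed

lemma inv_shift_mat_linear_AONT_2:
  assumes prime_field: "CARD('a::finite_field) = CHAR('a)"
  shows "linear_AONT 2 CARD('a) (inv_shift_mat CARD('a) :: 'a mat)"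
proof -
  let ?p = "CARD('a)" and ?N = "inv_shift_mat CARD('a) :: 'a mat"
  have N: "?N \<in> carrier_mat ?p ?p" by (simp add: inv_shift_mat_def)
  have inj: "inj_on (of_nat :: nat \<Rightarrow> 'a) {..<?p}"
    using bij_betw_of_nat_prime_field[OF prime_field] prime_field by (simp add: bij_betw_def)
  have N_index: "?N $$ (i, j) = inv_shift (of_nat i) (of_nat j)" if "i < ?p" "j < ?p" for i j
    using that by (simp add: inv_shift_mat_def)
  have minors: "invertible_mat (submatrix ?N I J)"
    if I: "I \<subseteq> {..<?p}" "card I = 2" and J: "J \<subseteq> {..<?p}" "card J = 2" for I J
  proof (rule invertible_submatrix_card_2[OF N I J])
    fix i i' j j' assume "i \<in> I" "i' \<in> I" "j \<in> J" "j' \<in> J" "i \<noteq> i'" "j \<noteq> j'"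
    then have "(of_nat i :: 'a) \<noteq> of_nat i'" "(of_nat j :: 'a) \<noteq> of_nat j'"
      using I J inj by (auto dest: inj_onD)
    moreover have "i < ?p" "i' < ?p" "j < ?p" "j' < ?p"
      using \<open>i \<in> I\<close> \<open>i' \<in> I\<close> \<open>j \<in> J\<close> \<open>j' \<in> J\<close> I J by auto
    ultimately show "?N $$ (i, j) * ?N $$ (i', j') \<noteq> ?N $$ (i, j') * ?N $$ (i', j)"
      by (simp add: N_index inv_shift_minor_neq)
  qed
  have "invertible_mat ?N"
  proof (cases "?p = 2")
    case True
    then have "invertible_mat (submatrix ?N {..<?p} {..<?p})" by (intro minors) simp_all
    then show ?thesis using submatrix_lessThan[OF N] by simp
  next
    case False
    then have "3 \<le> ?p" using card_finite_field_ge_2[where ?'a = 'a] by simp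
    then show ?thesis by (rule invertible_inv_shift_mat[OF prime_field])
  qed
  then show ?thesis using N minors unfolding linear_AONT_def by blast
qed

theorem corollary2p26:
  fixes p :: nat
  assumes "CARD('q::prime_card) = p"
  shows "\<exists>M :: 'q mod_ring mat. linear_AONT (p - 2) p M"
proof -
  have p: "CARD('q mod_ring) = p" and prime_field: "CARD('q mod_ring) = CHAR('q mod_ring)"
    using assms by simp_all
  let ?N = "inv_shift_mat p :: 'q mod_ring mat"
  have AONT: "linear_AONT 2 p ?N"
    using inv_shift_mat_linear_AONT_2[OF prime_field] p by simp
  then have "invertible_mat ?N" and N: "?N \<in> carrier_mat p p"
    by (simp_all add: linear_AONT_def)
  then obtain M where M: "M \<in> carrier_mat p p" and NM: "?N * M = 1\<^sub>m p"
    by (rule invertible_matE)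
  have "2 \<le> p" using card_finite_field_ge_2[where ?'a = "'q mod_ring"] p by simp
  show ?thesis using linear_AONT_inverse[OF AONT \<open>2 \<le> p\<close> M NM] by blast
qed

end
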